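(* With $F_n$ as defined in the context, $$\int_{1+\frac{(\log n)^2}{n}}^{1+(\log n)^{-1}}F_n(w)\,dw\sim\tfrac12\,n\log n\qquad(n\to\infty).$$
   Context: For $w>0$ and integer $n\ge1$ let $a_n(w)=\sum_{j=0}^n w^j$, $b_n(w)=\sum_{j=1}^n jw^j$, $c_n(w)=\sum_{j=0}^n j^2w^j$, and $$F_n(w)=\frac{1}{2\sqrt{w}}\sqrt{\frac{c_n(w)}{a_n(w)}}\sqrt{\frac{a_n(w)c_n(w)-b_n(w)^2}{w\,a_n(w)^2}}.$$ $\log$ is the natural logarithm. *)

theory Defs
  imports "HOL-Analysis.Analysis" "HOL-Library.Landau_Symbols"
begin

definition a_n :: "nat \<Rightarrow> real \<Rightarrow> real" where
  "a_n n w = (\<Sum>j=0..n. w ^ j)"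

definition b_n :: "nat \<Rightarrow> real \<Rightarrow> real" where
  "b_n n w = (\<Sum>j=1..n. real j * w ^ j)"

definition c_n :: "nat \<Rightarrow> real \<Rightarrow> real" where
  "c_n n w = (\<Sum>j=0..n. (real j)^2 * w ^ j)"

definition F_n :: "nat \<Rightarrow> real \<Rightarrow> real" where
  "F_n n w = 1 / (2 * sqrt w) * sqrt (c_n n w / a_n n w)
     * sqrt ((a_n n w * c_n n w - (b_n n w)^2) / (w * (a_n n w)^2))"

end

theory Submission
  imports Defs "HOL-Real_Asymp.Real_Asymp"
begin

text \<open>For \<open>w > 1\<close> the sums \<open>a_n\<close>, \<open>b_n\<close>, \<open>c_n\<close> have closed forms, and
  \<open>F_n w = sqrt (c_n/a_n) * sqrt V / (2 w)\<close> with \<open>V\<close> the variance of the weights \<open>w^j\<close> on \<open>{0..n}\<close>.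
  Since \<open>c_n/a_n \<le> n^2\<close> and \<open>V \<le> w/(w-1)^2\<close>, we get \<open>F_n w \<le> n/(2(w-1))\<close>.
  Conversely, as soon as \<open>w^(n+1)\<close> dominates \<open>(n+1)^2\<close> (which holds on the whole range,
  where \<open>n (w-1) \<ge> (log n)^2\<close>), the mean \<open>b_n/a_n\<close> is at least \<open>n - 1/(w-1)\<close> and
  \<open>V\<close> is essentially \<open>1/(w-1)^2\<close>, so \<open>F_n w \<ge> (1 - o(1)) n/(2(w-1))\<close> uniformly.
  Integrating \<open>n/(2(w-1))\<close> over the range gives \<open>n/2 (log n - 3 log log n) \<sim> n log n / 2\<close>.\<close>

lemma a_n_closed_form: "(w - 1) * a_n n w = w ^ Suc n - 1"
  by (induction n) (auto simp: a_n_def algebra_simps)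

lemma b_n_closed_form:
  "(w - 1)^2 * b_n n w = w ^ Suc n * (real n * w - real n - 1) + w"
proof (induction n)
  case 0
  then show ?case by (simp add: b_n_def)
next
  case (Suc n)
  have "(w - 1)^2 * b_n (Suc n) w = (w - 1)^2 * b_n n w + (w - 1)^2 * real (Suc n) * w ^ Suc n"
    by (simp add: b_n_def algebra_simps)
  also have "\<dots> = w ^ Suc (Suc n) * (real (Suc n) * w - real (Suc n) - 1) + w"
    using Suc by (simp add: algebra_simps power2_eq_square)
  finally show ?case .
qed

lemma c_n_closed_form:
  "(w - 1)^3 * c_n n w
     = w ^ Suc n * ((real n)^2 * w^2 - (2 * (real n)^2 + 2 * real n - 1) * w + (real n + 1)^2)
       - w * (w + 1)"
proof (induction n)
  case 0
  then show ?case by (simp add: c_n_def algebra_simps power2_eq_square)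
next
  case (Suc n)
  have "(w - 1)^3 * c_n (Suc n) w = (w - 1)^3 * c_n n w + (w - 1)^3 * (real (Suc n))^2 * w ^ Suc n"
    by (simp add: c_n_def algebra_simps)
  also have "\<dots> = w ^ Suc (Suc n) * ((real (Suc n))^2 * w^2
                    - (2 * (real (Suc n))^2 + 2 * real (Suc n) - 1) * w + (real (Suc n) + 1)^2)
                  - w * (w + 1)"
    using Suc by (simp add: algebra_simps power2_eq_square power3_eq_cube)
  finally show ?case .
qed

lemma a_n_pos: "0 < w \<Longrightarrow> 0 < a_n n w"
  unfolding a_n_def by (intro sum_pos) auto

lemma c_n_le: "0 < w \<Longrightarrow> c_n n w \<le> (real n)^2 * a_n n w"
  unfolding c_n_def a_n_def sum_distrib_left
  by (intro sum_mono mult_right_mono power_mono) auto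

lemma b_n_sq_le:
  assumes "0 < w"
  shows "(b_n n w)^2 \<le> a_n n w * c_n n w"
proof -
  have sq: "sqrt (w ^ j) * sqrt (w ^ j) = w ^ j" for j :: nat
    using assms by simp
  have "b_n n w = (\<Sum>j=0..n. sqrt (w ^ j) * (real j * sqrt (w ^ j)))"
    unfolding b_n_def using sq by (simp add: sum.atLeast_Suc_atMost mult.left_commute)
  also have "\<dots>^2 \<le> (\<Sum>j=0..n. (sqrt (w ^ j))^2) * (\<Sum>j=0..n. (real j * sqrt (w ^ j))^2)"
    by (rule Cauchy_Schwarz_ineq_sum)
  also have "\<dots> = a_n n w * c_n n w"
    unfolding a_n_def c_n_def using assms by (simp add: power_mult_distrib)
  finally show ?thesis .
qed

text \<open>The variance of the distribution on \<open>{0..n}\<close> with weights proportional to \<open>w^j\<close>,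
  whose first two moments are \<open>b_n/a_n\<close> and \<open>c_n/a_n\<close>.\<close>

definition var_n :: "nat \<Rightarrow> real \<Rightarrow> real" where
  "var_n n w = (a_n n w * c_n n w - (b_n n w)^2) / (a_n n w)^2"

lemma var_n_nonneg: "0 < w \<Longrightarrow> 0 \<le> var_n n w"
  unfolding var_n_def using b_n_sq_le[of w n] by simp

lemma var_n_closed_form:
  assumes w: "1 < w"
  shows "var_n n w = w / (w - 1)^2 - (real n + 1)^2 * w ^ Suc n / (w ^ Suc n - 1)^2"
proof -
  define X where "X = w ^ Suc n"
  have X: "1 < X"
    unfolding X_def using w by (intro one_less_power) auto
  have "(w - 1)^4 * (a_n n w * c_n n w - (b_n n w)^2)
          = ((w - 1) * a_n n w) * ((w - 1)^3 * c_n n w) - ((w - 1)^2 * b_n n w)^2"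
    by (simp add: algebra_simps power2_eq_square power3_eq_cube power4_eq_xxxx)
  also have "\<dots> = w * (X - 1)^2 - (real n + 1)^2 * X * (w - 1)^2"
    unfolding a_n_closed_form b_n_closed_form c_n_closed_form X_def
    by (simp add: algebra_simps power2_eq_square)
  finally have "a_n n w * c_n n w - (b_n n w)^2
                  = (w * (X - 1)^2 - (real n + 1)^2 * X * (w - 1)^2) / (w - 1)^4"
    using w by (simp add: field_simps)
  moreover have "a_n n w = (X - 1) / (w - 1)"
    using a_n_closed_form[of w n] w unfolding X_def by (simp add: field_simps)
  moreover have "((w * Y^2 - k * X * t^2) / t^4) / (Y / t)^2 = w / t^2 - k * X / Y^2"
    if "t \<noteq> 0" "Y \<noteq> 0" for t Y k :: real
    using that by (simp add: field_simps power2_eq_square power4_eq_xxxx)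
  ultimately show ?thesis
    using w X unfolding var_n_def X_def[symmetric] by simp
qed

lemma F_n_eq:
  assumes "0 < w"
  shows "F_n n w = sqrt (c_n n w / a_n n w) * sqrt (var_n n w) / (2 * w)"
proof -
  have split: "sqrt (x / (w * y)) = sqrt (x / y) / sqrt w" for x y
    by (simp add: real_sqrt_divide real_sqrt_mult)
  have "1 / (2 * sqrt w) * q * (r / sqrt w) = q * r / (2 * w)" for q r
    using assms by (simp add: field_simps)
  then show ?thesis
    unfolding F_n_def var_n_def split .
qed

lemma F_n_le:
  assumes w: "1 < w"
  shows "F_n n w \<le> real n / (2 * (w - 1))"
proof -
  have w0: "0 < w"
    using w by simp
  have "c_n n w / a_n n w \<le> (real n)^2"
    using c_n_le[of w n] a_n_pos[of w n] w by (simp add: field_simps)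
  then have mean_sq: "sqrt (c_n n w / a_n n w) \<le> real n"
    using real_sqrt_le_mono by fastforce
  have "var_n n w \<le> (sqrt w / (w - 1))^2"
    using var_n_closed_form[OF w] w by (simp add: power_divide)
  then have sd: "sqrt (var_n n w) \<le> sqrt w / (w - 1)"
    using w real_sqrt_le_mono by fastforce
  have "F_n n w \<le> real n * (sqrt w / (w - 1)) / (2 * w)"
    unfolding F_n_eq[OF w0] using w mean_sq sd var_n_nonneg[OF w0]
    by (intro divide_right_mono mult_mono) auto
  also have "\<dots> \<le> real n * (w / (w - 1)) / (2 * w)"
    using w real_le_lsqrt[of w w] by (intro divide_right_mono mult_left_mono) (auto simp: power2_eq_square)
  also have "\<dots> = real n / (2 * (w - 1))"
    using w by simp
  finally show ?thesis .
qed

lemma b_n_ge: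
  assumes w: "1 < w"
  shows "a_n n w * (real n - 1 / (w - 1)) \<le> b_n n w"
proof -
  have "(w - 1)^2 * (b_n n w - a_n n w * (real n - 1 / (w - 1)))
          = (w - 1)^2 * b_n n w - ((w - 1) * a_n n w) * (real n * (w - 1) - 1)"
    using w by (simp add: field_simps power2_eq_square)
  also have "\<dots> = (real n + 1) * (w - 1)"
    unfolding a_n_closed_form b_n_closed_form by (simp add: algebra_simps)
  finally have "0 \<le> (w - 1)^2 * (b_n n w - a_n n w * (real n - 1 / (w - 1)))"
    using w by simp
  then show ?thesis
    using w by (simp add: zero_le_mult_iff)
qed

text \<open>Once \<open>w^(n+1)\<close> is large, the correction term in the closed form is negligible and
  the variance is essentially \<open>1/(w-1)^2\<close>.\<close>

lemma var_n_ge: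
  assumes w: "1 < w" "w \<le> 2" and X: "2 \<le> w ^ Suc n"
    and d: "4 * (real n + 1)^2 / w ^ Suc n \<le> d" "d \<le> 1"
  shows "((1 - d) / (w - 1))^2 \<le> var_n n w"
proof -
  define X where "X = w ^ Suc n"
  define t where "t = w - 1"
  have t: "0 < t" "t \<le> 1"
    using w by (auto simp: t_def)
  have X2: "2 \<le> X"
    using X by (simp add: X_def)
  have "0 \<le> 4 * (real n + 1)^2 / w ^ Suc n"
    using w by simp
  then have d0: "0 \<le> d"
    using d(1) by linarith
  have "X / (X - 1)^2 \<le> X / (X / 2)^2"
    using X2 by (intro divide_left_mono power_mono mult_pos_pos) auto
  also have "\<dots> = 4 / X"
    using X2 by (simp add: field_simps power2_eq_square)
  finally have "(real n + 1)^2 * (X / (X - 1)^2) \<le> (real n + 1)^2 * (4 / X)"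
    by (intro mult_left_mono) auto
  then have correction: "(real n + 1)^2 * X / (X - 1)^2 \<le> d"
    using d(1) unfolding X_def by (simp add: ac_simps)
  have "1 \<le> 1 / t^2"
    using t by (simp add: field_simps power_le_one)
  then have "1 * 1 \<le> (2 - d) * (1 / t^2)"
    using d(2) by (intro mult_mono) auto
  then have "d * 1 \<le> d * ((2 - d) * (1 / t^2))"
    using d0 by (intro mult_left_mono) auto
  moreover have "((1 - d) / t)^2 = 1 / t^2 - d * ((2 - d) * (1 / t^2))"
    using t by (simp add: field_simps power2_eq_square)
  moreover have "1 / t^2 \<le> w / t^2"
    using w by (intro divide_right_mono) auto
  ultimately show ?thesis
    using correction unfolding var_n_closed_form[OF w(1)] X_def t_def by linarith
qed

lemma F_n_ge:
  assumes w: "1 < w" "w \<le> 2" and X: "2 \<le> w ^ Suc n"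
    and d: "4 * (real n + 1)^2 / w ^ Suc n \<le> d" "d \<le> 1"
    and n: "1 / (w - 1) \<le> real n"
  shows "(real n - 1 / (w - 1)) * (1 - d) / (2 * w * (w - 1)) \<le> F_n n w"
proof -
  have w0: "0 < w"
    using w by simp
  have a: "0 < a_n n w"
    using a_n_pos w0 by simp
  have sd: "(1 - d) / (w - 1) \<le> sqrt (var_n n w)"
    using var_n_ge[OF w X d] real_le_rsqrt by blast
  have "(b_n n w / a_n n w)^2 \<le> c_n n w / a_n n w"
    using b_n_sq_le[OF w0, of n] a by (simp add: field_simps power2_eq_square)
  then have "b_n n w / a_n n w \<le> sqrt (c_n n w / a_n n w)"
    using real_le_rsqrt by blast
  moreover have "real n - 1 / (w - 1) \<le> b_n n w / a_n n w"
    using b_n_ge[OF w(1)] a by (simp add: field_simps)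
  ultimately have mean: "real n - 1 / (w - 1) \<le> sqrt (c_n n w / a_n n w)"
    by linarith
  have "0 \<le> sqrt (c_n n w / a_n n w)"
    using mean n by linarith
  have "(real n - 1 / (w - 1)) * ((1 - d) / (w - 1)) / (2 * w) \<le> F_n n w"
    unfolding F_n_eq[OF w0] using w d n mean sd \<open>0 \<le> sqrt (c_n n w / a_n n w)\<close>
    by (intro divide_right_mono mult_mono) auto
  then show ?thesis
    by (simp add: field_simps)
qed

lemma continuous_on_F_n: "continuous_on {1..} (F_n n)"
proof -
  have "a_n n w \<noteq> 0" if "w \<in> {1..}" for w
    using a_n_pos[of w n] that by auto
  then show ?thesis
    unfolding F_n_def a_n_def b_n_def c_n_def by (intro continuous_intros) auto
qed

lemma has_integral_div_minus_one:
  fixes s t c :: real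
  assumes "0 < s" "s \<le> t"
  shows "((\<lambda>w. c / (w - 1)) has_integral c * (ln t - ln s)) {1 + s..1 + t}"
proof -
  have "((\<lambda>w. c / (w - 1)) has_integral c * ln ((1 + t) - 1) - c * ln ((1 + s) - 1)) {1 + s..1 + t}"
  proof (rule fundamental_theorem_of_calculus)
    fix x assume "x \<in> {1 + s..1 + t}"
    then have "1 < x"
      using assms by auto
    then show "((\<lambda>w. c * ln (w - 1)) has_vector_derivative c / (x - 1)) (at x within {1 + s..1 + t})"
      by (auto intro!: derivative_eq_intros has_vector_derivative_at_within
               simp: has_real_derivative_iff_has_vector_derivative[symmetric])
  qed (use assms in simp)
  then show ?thesis
    by (simp add: algebra_simps)
qed

text \<open>On the window \<open>L^2/n \<le> w - 1 \<le> 1/L\<close> we have \<open>w^n \<ge> exp (n (w - 1) / 2) \<ge> exp (L^2/2)\<close>,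
  which makes the lower bound of \<open>F_n_ge\<close> a constant multiple of \<open>n / (2 (w - 1))\<close>.\<close>

lemma F_n_ge_window:
  fixes n :: nat and L :: real
  defines "d \<equiv> 4 * (real n + 1)^2 / exp (L^2 / 2)"
  assumes n: "0 < n" and L: "2 \<le> L" and d1: "d \<le> 1"
    and w: "L^2 / real n \<le> w - 1" "w - 1 \<le> 1 / L"
  shows "(1 - 1 / L^2) * (1 - d) / (1 + 1 / L) * (real n / (2 * (w - 1))) \<le> F_n n w"
proof -
  define t where "t = w - 1"
  have L2: "4 \<le> L^2"
    using power_mono[OF L, of 2] by simp
  have s: "0 < L^2 / real n"
    using n L by simp
  have "1 / L \<le> 1 / 2"
    using L by simp
  then have t: "0 < t" "t \<le> 1 / 2"
    using w s by (auto simp: t_def)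
  have "t - t^2 \<le> ln w"
    using ln_one_plus_pos_lower_bound[of t] t by (simp add: t_def)
  moreover have "t^2 \<le> t / 2"
    using t mult_left_mono[of t "1/2" t] by (simp add: power2_eq_square)
  ultimately have "real n * (t / 2) \<le> real n * ln w"
    by (intro mult_left_mono) auto
  moreover have "L^2 / 2 \<le> real n * (t / 2)"
    using w(1) n by (simp add: t_def field_simps)
  ultimately have "exp (L^2 / 2) \<le> exp (real n * ln w)"
    by simp
  also have "\<dots> = w ^ n"
    using t by (simp add: t_def exp_of_nat_mult)
  also have "\<dots> \<le> w ^ Suc n"
    using t by (simp add: t_def)
  finally have X: "exp (L^2 / 2) \<le> w ^ Suc n" .
  have exp2: "2 \<le> exp (L^2 / 2)"
    using exp_ge_add_one_self[of "L^2 / 2"] L2 by linarith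
  have X2: "2 \<le> w ^ Suc n"
    using X exp2 by linarith
  have dX: "4 * (real n + 1)^2 / w ^ Suc n \<le> d"
    unfolding d_def using X exp2 by (intro divide_left_mono) auto
  have "1 / t \<le> 1 / (L^2 / real n)"
    using w(1) s by (intro frac_le) (auto simp: t_def)
  then have inv_t: "1 / t \<le> real n / L^2"
    by simp
  moreover have "real n / L^2 \<le> real n"
    using L2 by (simp add: divide_le_eq mult_le_cancel_left1)
  ultimately have n_t: "1 / t \<le> real n"
    by linarith
  have n_L: "real n * (1 - 1 / L^2) \<le> real n - 1 / t"
    using inv_t by (simp add: algebra_simps)
  have "(1 - 1 / L^2) * (1 - d) / (1 + 1 / L) * (real n / (2 * t))
          = (real n * (1 - 1 / L^2)) * (1 - d) / (2 * (1 + 1 / L) * t)"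
    by (simp add: field_simps)
  also have "\<dots> \<le> (real n - 1 / t) * (1 - d) / (2 * w * t)"
  proof (rule frac_le)
    show "0 \<le> (real n - 1 / t) * (1 - d)"
      using n_t d1 by simp
    show "real n * (1 - 1 / L^2) * (1 - d) \<le> (real n - 1 / t) * (1 - d)"
      using n_L d1 by (intro mult_right_mono) auto
    show "0 < 2 * w * t"
      using t by (simp add: t_def)
    show "2 * w * t \<le> 2 * (1 + 1 / L) * t"
      using t w(2) by (simp add: t_def)
  qed
  also have "\<dots> \<le> F_n n w"
    using F_n_ge[of w n d] t X2 dX d1 n_t by (simp add: t_def)
  finally show ?thesis
    by (simp add: t_def)
qed

lemma integral_F_n_bounds:
  fixes n :: nat and L :: real
  defines "d \<equiv> 4 * (real n + 1)^2 / exp (L^2 / 2)"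
  defines "I \<equiv> real n / 2 * (ln (real n) - 3 * ln L)"
  assumes L: "2 \<le> L" and n: "L^3 < real n" and d1: "d \<le> 1"
  shows "(1 - 1 / L^2) * (1 - d) / (1 + 1 / L) * I \<le> integral {1 + L^2 / real n..1 + 1 / L} (F_n n)"
    and "integral {1 + L^2 / real n..1 + 1 / L} (F_n n) \<le> I"
proof -
  let ?W = "{1 + L^2 / real n..1 + 1 / L}"
  let ?K = "(1 - 1 / L^2) * (1 - d) / (1 + 1 / L)"
  have "0 < L^3"
    using L by simp
  then have "0 < real n"
    using n by linarith
  then have n0: "0 < n"
    by simp
  have s: "0 < L^2 / real n" "L^2 / real n \<le> 1 / L"
    using n n0 L by (auto simp: field_simps power3_eq_cube power2_eq_square)
  have ln_ratio: "ln (1 / L) - ln (L^2 / real n) = ln (real n) - 3 * ln L"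
    using n0 L by (simp add: ln_div ln_mult power2_eq_square)
  have int: "((\<lambda>w. c / (w - 1)) has_integral c / (real n / 2) * I) ?W" for c
  proof -
    have "c / (real n / 2) * I = c * (ln (1 / L) - ln (L^2 / real n))"
      using n0 unfolding I_def ln_ratio by simp
    then show ?thesis
      using has_integral_div_minus_one[OF s, of c] by simp
  qed
  have F: "F_n n integrable_on ?W"
    by (rule integrable_continuous_real, rule continuous_on_subset[OF continuous_on_F_n])
      (use s in auto)
  have "?K * (real n / 2) / (real n / 2) * I \<le> integral ?W (F_n n)"
  proof (rule has_integral_le[OF int integrable_integral[OF F]])
    fix w assume "w \<in> ?W"
    then have "?K * (real n / (2 * (w - 1))) \<le> F_n n w"
      by (intro F_n_ge_window[OF n0 L d1[unfolded d_def], folded d_def]) auto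
    then show "?K * (real n / 2) / (w - 1) \<le> F_n n w"
      by (simp only: times_divide_eq_right divide_divide_eq_left)
  qed
  moreover have "?K * (real n / 2) / (real n / 2) = ?K"
    using n0 by (intro nonzero_mult_div_cancel_right) simp
  ultimately show "?K * I \<le> integral ?W (F_n n)"
    by metis
  have "integral ?W (F_n n) \<le> real n / 2 / (real n / 2) * I"
  proof (rule has_integral_le[OF integrable_integral[OF F] int])
    fix w assume "w \<in> ?W"
    then have "1 < w"
      using s by auto
    then show "F_n n w \<le> real n / 2 / (w - 1)"
      using F_n_le[of w n] by simp
  qed
  moreover have "real n / 2 / (real n / 2) = 1"
    using n0 by simp
  ultimately show "integral ?W (F_n n) \<le> I"
    by simp
qed

lemma window_eventually:
  "eventually (\<lambda>n::nat. 2 \<le> ln (real n) \<and> ln (real n)^3 < real n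
      \<and> 4 * (real n + 1)^2 / exp (ln (real n)^2 / 2) \<le> 1) sequentially"
  by (intro eventually_conj) real_asymp+

theorem proposition3p2:
  shows "(\<lambda>n::nat. integral {1 + (ln (real n))^2 / real n .. 1 + 1 / ln (real n)} (F_n n))
           \<sim>[sequentially] (\<lambda>n. (1/2) * real n * ln (real n))"
proof (rule asymp_equiv_sandwich_real)
  define K where "K n = (1 - 1 / ln (real n)^2) * (1 - 4 * (real n + 1)^2 / exp (ln (real n)^2 / 2))
                         / (1 + 1 / ln (real n))" for n :: nat
  define I where "I n = real n / 2 * (ln (real n) - 3 * ln (ln (real n)))" for n :: nat
  show "(\<lambda>n. K n * I n) \<sim>[sequentially] (\<lambda>n. (1/2) * real n * ln (real n))"
    unfolding K_def I_def by real_asymp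
  show "I \<sim>[sequentially] (\<lambda>n. (1/2) * real n * ln (real n))"
    unfolding I_def by real_asymp
  show "eventually (\<lambda>n. integral {1 + (ln (real n))^2 / real n .. 1 + 1 / ln (real n)} (F_n n)
                          \<in> {K n * I n..I n}) sequentially"
    using window_eventually
  proof eventually_elim
    case (elim n)
    then show ?case
      using integral_F_n_bounds[of "ln (real n)" n] unfolding K_def I_def atLeastAtMost_iff by blast
  qed
qed

end
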